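(* Consider the setting: $x_l=\theta+\sigma\eta_l$ with $\theta\in(0,\theta_R]$, $\sigma>0$, $\eta_l$ i.i.d. symmetric about zero with real characteristic function $\varphi_\eta$; power $P>0$, channel noise variance $\sigma_\nu^2\ge 0$, and design parameter $\omega\in(0,2\pi/\theta_R]$. Define $\mathrm{AsV}_{\hat\theta}(\omega)=\dfrac{P+\sigma_\nu^2-P\varphi_\eta(2\sigma\omega)}{2P\omega^2\varphi_\eta^2(\sigma\omega)}$, $\mathrm{AsV}_{\hat\sigma}(\omega)=\dfrac{P+\sigma_\nu^2-2P\varphi_\eta^2(\sigma\omega)+P\varphi_\eta(2\sigma\omega)}{2P\left[\frac{\partial\varphi_\eta(\sigma\omega)}{\partial\sigma}\right]^2}$, and, with $\gamma=\theta^2/\sigma^2$, $\mathrm{AsV}_{\hat\gamma}(\omega)=\dfrac{4\gamma}{\sigma^2}\left[\mathrm{AsV}_{\hat\theta}(\omega)+\gamma\,\mathrm{AsV}_{\hat\sigma}(\omega)\right]$. Let $\omega_\theta^*,\omega_\sigma^*,\omega_\gamma^*$ denote the minimizers over $\omega\in(0,2\pi/\theta_R]$ (understood as the limiting endpoint $0$ when the infimum is approached as $\omega\to0$) of $\mathrm{AsV}_{\hat\theta}$, $\mathrm{AsV}_{\hat\sigma}$, $\mathrm{AsV}_{\hat\gamma}$ respectively. If $\mathrm{AsV}_{\hat\theta}$ and $\mathrm{AsV}_{\hat\sigma}$ are differentiable quasi-convex functions of $\omega$ on $(0,2\pi/\theta_R]$, then $\omega_\gamma^*$ lies between $\omega_\theta^*$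 and $\omega_\sigma^*$.
   Context: A univariate function $f$ on $(0,2\pi/\theta_R]$ is called quasi-convex if either (c1) $f$ is monotone (non-decreasing or non-increasing), or (c2) $f$ has a global minimum at some $\omega^*$ such that $f$ is non-increasing for $\omega\le\omega^*$ and non-decreasing for $\omega\ge\omega^*$. *)

theory Defs
  imports "HOL-Probability.Probability"
begin

definition quasi_convex_on :: "real \<Rightarrow> (real \<Rightarrow> real) \<Rightarrow> bool" where
  "quasi_convex_on W f \<longleftrightarrow>
     (\<forall>x\<in>{0<..W}. \<forall>y\<in>{0<..W}. x \<le> y \<longrightarrow> f x \<le> f y) \<or>
     (\<forall>x\<in>{0<..W}. \<forall>y\<in>{0<..W}. x \<le> y \<longrightarrow> f y \<le> f x) \<or>
     (\<exists>w0\<in>{0<..W}. (\<forall>x\<in>{0<..W}. f w0 \<le> f x) \<and>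
        (\<forall>x\<in>{0<..W}. \<forall>y\<in>{0<..W}. x \<le> y \<longrightarrow> y \<le> w0 \<longrightarrow> f y \<le> f x) \<and>
        (\<forall>x\<in>{0<..W}. \<forall>y\<in>{0<..W}. w0 \<le> x \<longrightarrow> x \<le> y \<longrightarrow> f x \<le> f y))"

definition is_minimizer :: "real \<Rightarrow> (real \<Rightarrow> real) \<Rightarrow> real \<Rightarrow> bool" where
  "is_minimizer W f w \<longleftrightarrow>
     (w \<in> {0<..W} \<and> (\<forall>x\<in>{0<..W}. f w \<le> f x)) \<or>
     (w = 0 \<and> (f \<longlongrightarrow> Inf (f ` {0<..W})) (at_right 0))"

definition phi :: "real measure \<Rightarrow> real \<Rightarrow> real" where
  "phi M t = Re (char M t)"

definition AsV_theta :: "real measure \<Rightarrow> real \<Rightarrow> real \<Rightarrow> real \<Rightarrow> real \<Rightarrow> real" where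
  "AsV_theta M P s2nu sg \<omega> =
     (P + s2nu - P * phi M (2 * sg * \<omega>)) / (2 * P * \<omega>^2 * (phi M (sg * \<omega>))^2)"

definition AsV_sigma :: "real measure \<Rightarrow> real \<Rightarrow> real \<Rightarrow> real \<Rightarrow> real \<Rightarrow> real" where
  "AsV_sigma M P s2nu sg \<omega> =
     (P + s2nu - 2 * P * (phi M (sg * \<omega>))^2 + P * phi M (2 * sg * \<omega>)) /
     (2 * P * (deriv (\<lambda>s. phi M (s * \<omega>)) sg)^2)"

definition AsV_gamma :: "real measure \<Rightarrow> real \<Rightarrow> real \<Rightarrow> real \<Rightarrow> real \<Rightarrow> real \<Rightarrow> real" where
  "AsV_gamma M P s2nu theta sg \<omega> =
     (let \<gamma> = theta^2 / sg^2 in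
      4 * \<gamma> / sg^2 * (AsV_theta M P s2nu sg \<omega> + \<gamma> * AsV_sigma M P s2nu sg \<omega>))"

end

theory Submission imports Defs begin

text \<open>Write h = a f + b g with a, b > 0, where f and g are the asymptotic variances of the
estimators of theta and sigma with minimizers p \<le> q. A quasi-convex function is non-increasing
left of any of its minimizers and non-decreasing right of it, so h is non-increasing on (0, p]
and non-decreasing on [q, W]. Hence h attains its infimum over (0, W] in [p, q], or, when
p = 0, approaches it as the argument tends to 0; in the latter case h has a limit at 0
(possibly +\<infinity>) because f and g are monotone near 0.\<close>

lemma quasi_convex_on_le_max:
  assumes qc: "quasi_convex_on W f"
    and xyz: "x \<in> {0<..W}" "y \<in> {0<..W}" "z \<in> {0<..W}" "x \<le> y" "y \<le> z"
  shows "f y \<le> max (f x) (f z)"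
  using qc unfolding quasi_convex_on_def
proof (elim disjE bexE conjE)
  fix w0 assume dec: "\<forall>x\<in>{0<..W}. \<forall>y\<in>{0<..W}. x \<le> y \<longrightarrow> y \<le> w0 \<longrightarrow> f y \<le> f x"
    and inc: "\<forall>x\<in>{0<..W}. \<forall>y\<in>{0<..W}. w0 \<le> x \<longrightarrow> x \<le> y \<longrightarrow> f x \<le> f y"
  show ?thesis
  proof (cases "y \<le> w0")
    case True then show ?thesis using dec xyz by fastforce
  next
    case False then show ?thesis using inc xyz by fastforce
  qed
qed (use xyz in fastforce)+

lemma quasi_convex_on_mono_or_bdd_below:
  assumes "quasi_convex_on W f"
  shows "mono_on {0<..W} f \<or> bdd_below (f ` {0<..W})"
  using assms unfolding quasi_convex_on_def
proof (elim disjE bexE conjE)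
  assume "\<forall>x\<in>{0<..W}. \<forall>y\<in>{0<..W}. x \<le> y \<longrightarrow> f y \<le> f x"
  then have "bdd_below (f ` {0<..W})"
    by (cases "W > 0") (auto intro!: bdd_belowI[of _ "f W"])
  then show ?thesis ..
next
  fix w0 assume "\<forall>x\<in>{0<..W}. f w0 \<le> f x"
  then have "bdd_below (f ` {0<..W})" by (auto intro!: bdd_belowI[of _ "f w0"])
  then show ?thesis ..
qed (auto intro: mono_onI)

lemma is_minimizer_range:
  assumes "W > 0" "is_minimizer W f w"
  shows "w \<in> {0..W}"
  using assms unfolding is_minimizer_def by auto

lemma quasi_convex_minimizer_antimono:
  assumes qc: "quasi_convex_on W f" and min: "is_minimizer W f w"
  shows "antimono_on {0<..w} f"
proof (cases "w = 0")
  case True then show ?thesis by (simp add: monotone_on_def)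
next
  case False
  then have w: "w \<in> {0<..W}" "\<forall>x\<in>{0<..W}. f w \<le> f x"
    using min unfolding is_minimizer_def by auto
  show ?thesis
  proof (rule monotone_onI)
    fix x y assume xy: "x \<in> {0<..w}" "y \<in> {0<..w}" "x \<le> y"
    then have "f y \<le> max (f x) (f w)"
      using quasi_convex_on_le_max[OF qc] w(1) by auto
    then show "f y \<le> f x" using w xy by auto
  qed
qed

lemma quasi_convex_minimizer_mono:
  assumes qc: "quasi_convex_on W f" and min: "is_minimizer W f w"
  shows "mono_on ({0<..W} \<inter> {w..}) f"
proof (cases "w = 0")
  case False
  then have w: "w \<in> {0<..W}" "\<forall>x\<in>{0<..W}. f w \<le> f x"
    using min unfolding is_minimizer_def by auto
  show ?thesis
  proof (rule mono_onI)
    fix x y assume xy: "x \<in> {0<..W} \<inter> {w..}" "y \<in> {0<..W} \<inter> {w..}" "x \<le> y"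
    then have "f x \<le> max (f w) (f y)"
      using quasi_convex_on_le_max[OF qc] w(1) by auto
    then show "f x \<le> f y" using w xy by auto
  qed
next
  case True
  then have lim: "(f \<longlongrightarrow> Inf (f ` {0<..W})) (at_right 0)"
    using min unfolding is_minimizer_def by auto
  have "mono_on {0<..W} f"
    using quasi_convex_on_mono_or_bdd_below[OF qc]
  proof
    assume bdd: "bdd_below (f ` {0<..W})"
    show ?thesis
    proof (rule mono_onI, rule ccontr)
      fix x y assume xy: "x \<in> {0<..W}" "y \<in> {0<..W}" "x \<le> y" and "\<not> f x \<le> f y"
      \<comment> \<open>then f stays above f x near 0, so its limit there exceeds f y\<close>
      have "\<forall>\<^sub>F t in at_right 0. f x \<le> f t"
        unfolding eventually_at_right_field
      proof (intro exI[of _ x] conjI allI impI)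
        fix t assume "0 < t" "t < x"
        then have "f x \<le> max (f t) (f y)"
          using quasi_convex_on_le_max[OF qc, of t x y] xy by auto
        then show "f x \<le> f t" using \<open>\<not> f x \<le> f y\<close> by auto
      qed (use xy in auto)
      then have "f x \<le> Inf (f ` {0<..W})"
        using tendsto_lowerbound[OF lim _ trivial_limit_at_right_real] by blast
      also have "\<dots> \<le> f y" using bdd xy by (auto intro: cInf_lower)
      finally show False using \<open>\<not> f x \<le> f y\<close> by simp
    qed
  qed
  then show ?thesis by (rule monotone_on_subset) auto
qed

lemma antimono_on_tendsto_at_right_or_at_top:
  fixes g :: "real \<Rightarrow> real"
  assumes q: "q > 0" and dec: "antimono_on {0<..q} g"
  shows "(\<exists>G. (g \<longlongrightarrow> G) (at_right 0)) \<or> filterlim g at_top (at_right 0)"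
proof (cases "bdd_above (g ` {0<..q})")
  case bdd: True
  have ne: "g ` {0<..q} \<noteq> {}" using q by auto
  have "(g \<longlongrightarrow> Sup (g ` {0<..q})) (at_right 0)"
  proof (rule order_tendstoI)
    fix z assume "z < Sup (g ` {0<..q})"
    then obtain y where y: "y \<in> {0<..q}" "z < g y"
      using less_cSup_iff[OF ne bdd] by auto
    show "\<forall>\<^sub>F x in at_right 0. z < g x"
      unfolding eventually_at_right_field
    proof (intro exI[of _ y] conjI allI impI)
      fix x assume "0 < x" "x < y"
      then have "g y \<le> g x" using y by (intro monotone_onD[OF dec]) auto
      then show "z < g x" using y by simp
    qed (use y in auto)
  next
    fix z assume "Sup (g ` {0<..q}) < z"
    moreover have "g x \<le> Sup (g ` {0<..q})" if "x \<in> {0<..q}" for x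
      using bdd that by (auto intro: cSup_upper)
    ultimately show "\<forall>\<^sub>F x in at_right 0. g x < z"
      unfolding eventually_at_right_field using q by (intro exI[of _ q]) force
  qed
  then show ?thesis by blast
next
  case False
  have "filterlim g at_top (at_right 0)"
    unfolding filterlim_at_top
  proof
    fix z
    have "\<exists>y\<in>{0<..q}. z < g y"
      using False unfolding bdd_above_def by (auto simp: not_le)
    then obtain y where y: "y \<in> {0<..q}" "z < g y" ..
    show "\<forall>\<^sub>F x in at_right 0. z \<le> g x"
      unfolding eventually_at_right_field
    proof (intro exI[of _ y] conjI allI impI)
      fix x assume "0 < x" "x < y"
      then have "g y \<le> g x" using y by (intro monotone_onD[OF dec]) auto
      then show "z \<le> g x" using y by simp
    qed (use y in auto)
  qed
  then show ?thesis ..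
qed

lemma tendsto_or_at_top_weighted_sum:
  fixes f g :: "'a \<Rightarrow> real"
  assumes f: "(f \<longlongrightarrow> L) F" and b: "b > 0"
    and g: "(\<exists>G. (g \<longlongrightarrow> G) F) \<or> filterlim g at_top F"
  shows "(\<exists>H. ((\<lambda>x. a * f x + b * g x) \<longlongrightarrow> H) F) \<or> filterlim (\<lambda>x. a * f x + b * g x) at_top F"
  using g
proof
  assume "\<exists>G. (g \<longlongrightarrow> G) F"
  then obtain G where "(g \<longlongrightarrow> G) F" ..
  then have "((\<lambda>x. a * f x + b * g x) \<longlongrightarrow> a * L + b * G) F"
    by (intro tendsto_intros f)
  then show ?thesis by blast
next
  assume "filterlim g at_top F"
  then have "filterlim (\<lambda>x. b * g x) at_top F"
    using b by (intro filterlim_tendsto_pos_mult_at_top[OF tendsto_const]) auto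
  with tendsto_mult_left[OF f] have "filterlim (\<lambda>x. a * f x + b * g x) at_top F"
    by (rule filterlim_tendsto_add_at_top)
  then show ?thesis ..
qed

lemma is_minimizer_zeroI:
  fixes h :: "real \<Rightarrow> real"
  assumes W: "W > 0" and lim: "(h \<longlongrightarrow> H) (at_right 0)"
    and le: "\<forall>x\<in>{0<..W}. H \<le> h x"
  shows "is_minimizer W h 0"
proof -
  have bdd: "bdd_below (h ` {0<..W})" using le by (auto intro: bdd_belowI)
  have "H \<le> Inf (h ` {0<..W})" using W le by (auto intro: cInf_greatest)
  moreover have "\<forall>\<^sub>F x in at_right 0. Inf (h ` {0<..W}) \<le> h x"
    unfolding eventually_at_right_field
    by (rule exI[of _ W]) (use W bdd in \<open>auto intro: cInf_lower\<close>)
  then have "Inf (h ` {0<..W}) \<le> H"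
    using tendsto_lowerbound[OF lim _ trivial_limit_at_right_real] by blast
  ultimately show ?thesis using lim unfolding is_minimizer_def by auto
qed

lemma continuous_on_minimizer_in_interval:
  fixes h :: "real \<Rightarrow> real"
  assumes cd: "0 < c" "c \<le> d" "d \<le> W" and cont: "continuous_on {0<..W} h"
    and outside: "\<And>x. x \<in> {0<..W} \<Longrightarrow> x \<notin> {c..d} \<Longrightarrow> \<exists>y\<in>{c..d}. h y \<le> h x"
  shows "\<exists>w\<in>{c..d}. is_minimizer W h w"
proof -
  have "continuous_on {c..d} h" using cont by (rule continuous_on_subset) (use cd in auto)
  then obtain w where w: "w \<in> {c..d}" "\<forall>y\<in>{c..d}. h w \<le> h y"
    using continuous_attains_inf[of "{c..d}" h] cd by auto
  have "h w \<le> h x" if x: "x \<in> {0<..W}" for x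
  proof (cases "x \<in> {c..d}")
    case False
    then obtain y where "y \<in> {c..d}" "h y \<le> h x" using outside x by blast
    then show ?thesis using w(2) by (meson order.trans)
  qed (use w in auto)
  moreover have "w \<in> {0<..W}" using w(1) cd by auto
  ultimately have "is_minimizer W h w" unfolding is_minimizer_def by blast
  with w(1) show ?thesis ..
qed

lemma continuous_on_minimizer_between_pos:
  fixes h :: "real \<Rightarrow> real"
  assumes pq: "0 < p" "p \<le> q" "q \<le> W" and cont: "continuous_on {0<..W} h"
    and dec: "antimono_on {0<..p} h" and inc: "mono_on ({0<..W} \<inter> {q..}) h"
  shows "\<exists>w\<in>{p..q}. is_minimizer W h w"
proof (rule continuous_on_minimizer_in_interval[OF pq cont])
  fix x assume x: "x \<in> {0<..W}" "x \<notin> {p..q}"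
  then consider "x < p" | "q < x" by fastforce
  then show "\<exists>y\<in>{p..q}. h y \<le> h x"
  proof cases
    case 1
    then have "h p \<le> h x" using x pq by (intro monotone_onD[OF dec]) auto
    then show ?thesis using pq by (intro bexI[of _ p]) auto
  next
    case 2
    then have "h q \<le> h x" using x pq by (intro monotone_onD[OF inc]) auto
    then show ?thesis using pq by (intro bexI[of _ q]) auto
  qed
qed

lemma continuous_on_minimizer_near_zero:
  fixes h :: "real \<Rightarrow> real"
  assumes W: "W > 0" and q: "0 \<le> q" "q \<le> W" and cont: "continuous_on {0<..W} h"
    and inc: "mono_on ({0<..W} \<inter> {q..}) h"
    and lim: "(\<exists>H. (h \<longlongrightarrow> H) (at_right 0)) \<or> filterlim h at_top (at_right 0)"
  shows "\<exists>w\<in>{0..q}. is_minimizer W h w"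
proof (cases "\<exists>H. (h \<longlongrightarrow> H) (at_right 0) \<and> (\<forall>x\<in>{0<..W}. H \<le> h x)")
  case True
  then obtain H where "(h \<longlongrightarrow> H) (at_right 0)" "\<forall>x\<in>{0<..W}. H \<le> h x" by blast
  then have "is_minimizer W h 0" by (rule is_minimizer_zeroI[OF W])
  then show ?thesis using q by auto
next
  case False
  \<comment> \<open>then some value of h lies strictly below all values of h near 0\<close>
  obtain x0 where x0: "x0 \<in> {0<..W}" "\<forall>\<^sub>F x in at_right 0. h x0 < h x"
  proof -
    consider H where "(h \<longlongrightarrow> H) (at_right 0)" | "filterlim h at_top (at_right 0)"
      using lim by blast
    then show ?thesis
    proof cases
      case (1 H)
      with False have "\<not> (\<forall>x\<in>{0<..W}. H \<le> h x)" by blast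
      then obtain x0 where "x0 \<in> {0<..W}" "h x0 < H" by (auto simp: not_le)
      then show ?thesis using that order_tendstoD(1)[OF 1] by blast
    next
      case 2
      then have "\<forall>\<^sub>F x in at_right 0. h W < h x" by (simp add: filterlim_at_top_dense)
      then show ?thesis using that[of W] W by simp
    qed
  qed
  then obtain d where d: "d > 0" "\<And>y. 0 < y \<Longrightarrow> y < d \<Longrightarrow> h x0 < h y"
    unfolding eventually_at_right_field by blast
  have q_pos: "q > 0"
  proof (rule ccontr)
    assume "\<not> q > 0"
    define t where "t = min d x0 / 2"
    have "t \<in> {0<..W}" "t \<le> x0" using d x0 by (auto simp: t_def)
    then have "h t \<le> h x0" using \<open>\<not> q > 0\<close> x0 by (intro monotone_onD[OF inc]) auto
    moreover have "h x0 < h t" using d x0 by (intro d(2)) (auto simp: t_def)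
    ultimately show False by simp
  qed
  have right: "h q \<le> h x" if "x \<in> {0<..W}" "q < x" for x
    using that q q_pos by (intro monotone_onD[OF inc]) auto
  define x1 where "x1 = min x0 q"
  have x1: "x1 \<in> {0<..q}" "h x1 \<le> h x0"
    using x0 q_pos right by (auto simp: x1_def min_def)
  define c where "c = min d x1"
  have c: "0 < c" "c \<le> q" "x1 \<in> {c..q}" using d x1 by (auto simp: c_def)
  have "\<exists>w\<in>{c..q}. is_minimizer W h w"
  proof (rule continuous_on_minimizer_in_interval[OF c(1,2) q(2) cont])
    fix x assume x: "x \<in> {0<..W}" "x \<notin> {c..q}"
    then consider "x < c" | "q < x" by fastforce
    then show "\<exists>y\<in>{c..q}. h y \<le> h x"
    proof cases
      case 1
      then have "h x1 \<le> h x" using d(2)[of x] x1(2) x by (simp add: c_def)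
      then show ?thesis using c(3) by blast
    next
      case 2 then show ?thesis using right[OF x(1)] c by (intro bexI[of _ q]) auto
    qed
  qed
  then show ?thesis using c by fastforce
qed

lemma minimizer_between:
  fixes h :: "real \<Rightarrow> real"
  assumes W: "W > 0" and pq: "0 \<le> p" "p \<le> q" "q \<le> W"
    and cont: "continuous_on {0<..W} h"
    and dec: "antimono_on {0<..p} h" and inc: "mono_on ({0<..W} \<inter> {q..}) h"
    and lim: "p = 0 \<Longrightarrow> (\<exists>H. (h \<longlongrightarrow> H) (at_right 0)) \<or> filterlim h at_top (at_right 0)"
  shows "\<exists>w\<in>{p..q}. is_minimizer W h w"
proof (cases "p > 0")
  case True
  then show ?thesis using continuous_on_minimizer_between_pos pq cont dec inc by blast
next
  case False
  then have "p = 0" using pq by simp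
  then show ?thesis
    using continuous_on_minimizer_near_zero[OF W _ pq(3) cont inc lim] pq by simp
qed

lemma weighted_sum_minimizer_between:
  fixes f g :: "real \<Rightarrow> real"
  assumes W: "W > 0" and ab: "a > 0" "b > 0"
    and cf: "continuous_on {0<..W} f" and cg: "continuous_on {0<..W} g"
    and qf: "quasi_convex_on W f" and qg: "quasi_convex_on W g"
    and mf: "is_minimizer W f p" and mg: "is_minimizer W g q" and pq: "p \<le> q"
  shows "\<exists>w\<in>{p..q}. is_minimizer W (\<lambda>x. a * f x + b * g x) w"
proof (rule minimizer_between[OF W _ pq])
  show "0 \<le> p" using is_minimizer_range[OF W mf] by simp
  show "q \<le> W" using is_minimizer_range[OF W mg] by simp
  show "continuous_on {0<..W} (\<lambda>x. a * f x + b * g x)"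
    by (intro continuous_intros cf cg)
  have fdec: "antimono_on {0<..p} f" by (rule quasi_convex_minimizer_antimono[OF qf mf])
  have gdec: "antimono_on {0<..p} g"
    using pq by (intro monotone_on_subset[OF quasi_convex_minimizer_antimono[OF qg mg]]) auto
  show "antimono_on {0<..p} (\<lambda>x. a * f x + b * g x)"
  proof (rule monotone_onI)
    fix x y assume "x \<in> {0<..p}" "y \<in> {0<..p}" "x \<le> y"
    then have "f y \<le> f x" "g y \<le> g x"
      using monotone_onD[OF fdec] monotone_onD[OF gdec] by auto
    then show "a * f y + b * g y \<le> a * f x + b * g x"
      using ab by (intro add_mono mult_left_mono) auto
  qed
  have finc: "mono_on ({0<..W} \<inter> {q..}) f"
    using pq by (intro monotone_on_subset[OF quasi_convex_minimizer_mono[OF qf mf]]) auto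
  have ginc: "mono_on ({0<..W} \<inter> {q..}) g" by (rule quasi_convex_minimizer_mono[OF qg mg])
  show "mono_on ({0<..W} \<inter> {q..}) (\<lambda>x. a * f x + b * g x)"
  proof (rule mono_onI)
    fix x y assume "x \<in> {0<..W} \<inter> {q..}" "y \<in> {0<..W} \<inter> {q..}" "x \<le> y"
    then have "f x \<le> f y" "g x \<le> g y"
      using monotone_onD[OF finc] monotone_onD[OF ginc] by auto
    then show "a * f x + b * g x \<le> a * f y + b * g y"
      using ab by (intro add_mono mult_left_mono) auto
  qed
  assume p0: "p = 0"
  then have flim: "(f \<longlongrightarrow> Inf (f ` {0<..W})) (at_right 0)"
    using mf unfolding is_minimizer_def by auto
  have "(\<exists>G. (g \<longlongrightarrow> G) (at_right 0)) \<or> filterlim g at_top (at_right 0)"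
  proof (cases "q = 0")
    case True
    then show ?thesis using mg unfolding is_minimizer_def by auto
  next
    case False
    then have "q > 0" using is_minimizer_range[OF W mg] by simp
    then show ?thesis
      by (rule antimono_on_tendsto_at_right_or_at_top[OF _ quasi_convex_minimizer_antimono[OF qg mg]])
  qed
  then show "(\<exists>H. ((\<lambda>x. a * f x + b * g x) \<longlongrightarrow> H) (at_right 0))
      \<or> filterlim (\<lambda>x. a * f x + b * g x) at_top (at_right 0)"
    by (rule tendsto_or_at_top_weighted_sum[OF flim ab(2)])
qed

theorem theorem2:
  fixes M :: "real measure" and theta_R theta sg P s2nu :: real
    and w_theta w_sigma :: real
  assumes "prob_space M" and "sets M = sets borel"
    and "distr M borel uminus = M"
    and "theta_R > 0" and "0 < theta" and "theta \<le> theta_R"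
    and "sg > 0" and "P > 0" and "s2nu \<ge> 0"
    and "quasi_convex_on (2 * pi / theta_R) (AsV_theta M P s2nu sg)"
    and "quasi_convex_on (2 * pi / theta_R) (AsV_sigma M P s2nu sg)"
    and "AsV_theta M P s2nu sg differentiable_on {0<..2 * pi / theta_R}"
    and "AsV_sigma M P s2nu sg differentiable_on {0<..2 * pi / theta_R}"
    and "is_minimizer (2 * pi / theta_R) (AsV_theta M P s2nu sg) w_theta"
    and "is_minimizer (2 * pi / theta_R) (AsV_sigma M P s2nu sg) w_sigma"
  shows "\<exists>w_gamma. is_minimizer (2 * pi / theta_R) (AsV_gamma M P s2nu theta sg) w_gamma
           \<and> min w_theta w_sigma \<le> w_gamma \<and> w_gamma \<le> max w_theta w_sigma"
proof -
  define W where "W = 2 * pi / theta_R"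
  define a where "a = 4 * (theta^2 / sg^2) / sg^2"
  define b where "b = a * (theta^2 / sg^2)"
  have W: "W > 0" using \<open>theta_R > 0\<close> by (simp add: W_def)
  have a: "a > 0" and b: "b > 0" using \<open>0 < theta\<close> \<open>sg > 0\<close> by (simp_all add: a_def b_def)
  have gamma: "AsV_gamma M P s2nu theta sg
      = (\<lambda>x. a * AsV_theta M P s2nu sg x + b * AsV_sigma M P s2nu sg x)"
    by (simp add: AsV_gamma_def a_def b_def fun_eq_iff algebra_simps)
  note cont = assms(12,13)[THEN differentiable_imp_continuous_on, folded W_def]
  note qc = assms(10,11)[folded W_def] and min = assms(14,15)[folded W_def]
  show ?thesis
  proof (cases "w_theta \<le> w_sigma")
    case True
    then show ?thesis
      using weighted_sum_minimizer_between[OF W a b cont qc min True]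
      unfolding gamma W_def by auto
  next
    case False
    then show ?thesis
      using weighted_sum_minimizer_between[OF W b a cont(2,1) qc(2,1) min(2,1)]
      unfolding gamma W_def by (auto simp: add.commute)
  qed
qed

end
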